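(* Let $\mathcal H=(M,n,\mathcal R)$ be an MMS, $S$ a closed convex set, $x_0\in S$, and let $0<\Delta'\le\Delta$. Then $g_{\Delta',\Delta}(D_{\Delta'}\cap S)\supseteq D_\Delta\cap S$.
   Context: An MMS is a tuple $\mathcal H=(M,n,\mathcal R)$ with $M$ a finite nonempty set of modes and $\mathcal R(m)\subseteq\mathbb R^n$ finite nonempty for each mode; let $R=\bigcup_{m\in M}\mathcal R(m)$. For $\Delta>0$ let $D_\Delta=\{x_0+\Delta\sum_{r\in R}i_r r: i_r\in\mathbb N\}$. For $\Delta,\Delta'>0$ the map $g_{\Delta',\Delta}:D_{\Delta'}\to D_\Delta$ sends $x_0+\Delta'\sum_{r\in R}i_r r$ to $x_0+\Delta\sum_{r\in R}i_r r$ (this is well defined and bijective, independent of the chosen coefficients $i_r$). *)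

theory Defs
  imports "HOL-Analysis.Analysis"
begin

text \<open>An MMS (M, n, R): modes M (finite, nonempty), each mode m has a finite nonempty
  set R m of vectors in real^n; the dimension n is the finite index type 'n.\<close>
definition mms :: "'m set \<Rightarrow> ('m \<Rightarrow> (real^'n) set) \<Rightarrow> bool" where
  "mms M R \<longleftrightarrow> finite M \<and> M \<noteq> {} \<and> (\<forall>m\<in>M. finite (R m) \<and> R m \<noteq> {})"

definition all_rates :: "'m set \<Rightarrow> ('m \<Rightarrow> (real^'n) set) \<Rightarrow> (real^'n) set" where
  "all_rates M R = (\<Union>m\<in>M. R m)"

definition grid :: "'m set \<Rightarrow> ('m \<Rightarrow> (real^'n) set) \<Rightarrow> real^'n \<Rightarrow> real \<Rightarrow> (real^'n) set" where
  "grid M R x0 \<Delta> =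
     {x0 + \<Delta> *\<^sub>R (\<Sum>r\<in>all_rates M R. real (i r) *\<^sub>R r) | i :: real^'n \<Rightarrow> nat. True}"

definition grid_map :: "'m set \<Rightarrow> ('m \<Rightarrow> (real^'n) set) \<Rightarrow> real^'n \<Rightarrow> real \<Rightarrow> real \<Rightarrow> real^'n \<Rightarrow> real^'n" where
  "grid_map M R x0 \<Delta>' \<Delta> y =
     (let i = (SOME i :: real^'n \<Rightarrow> nat.
                 y = x0 + \<Delta>' *\<^sub>R (\<Sum>r\<in>all_rates M R. real (i r) *\<^sub>R r))
      in x0 + \<Delta> *\<^sub>R (\<Sum>r\<in>all_rates M R. real (i r) *\<^sub>R r))"

end

theory Submission
  imports Defs
begin

text \<open>Shrinking the step from \<open>\<Delta>\<close> to \<open>\<Delta>'\<close> moves the point \<open>x0 + \<Delta> v\<close> towards \<open>x0\<close>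
  along a segment, so convexity of \<open>S\<close> keeps it inside \<open>S\<close>; the map \<open>g\<close> undoes this
  rescaling because the coefficient sum is determined by the point once \<open>\<Delta>' \<noteq> 0\<close>.\<close>

lemma grid_map_eq:
  assumes "\<Delta>' \<noteq> 0"
  shows "grid_map M R x0 \<Delta>' \<Delta> (x0 + \<Delta>' *\<^sub>R (\<Sum>r\<in>all_rates M R. real (i r) *\<^sub>R r))
           = x0 + \<Delta> *\<^sub>R (\<Sum>r\<in>all_rates M R. real (i r) *\<^sub>R r)"
proof -
  let ?sum = "\<lambda>i. \<Sum>r\<in>all_rates M R. real (i r) *\<^sub>R r"
  define j where "j = (SOME j. x0 + \<Delta>' *\<^sub>R ?sum i = x0 + \<Delta>' *\<^sub>R ?sum j)"
  have "x0 + \<Delta>' *\<^sub>R ?sum i = x0 + \<Delta>' *\<^sub>R ?sum j"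
    unfolding j_def by (rule someI[where x = i]) (rule refl)
  with assms have "?sum j = ?sum i"
    by simp
  then show ?thesis
    unfolding grid_map_def Let_def j_def[symmetric] by simp
qed

lemma convex_shrink_towards:
  fixes x0 v :: "'a :: real_vector"
  assumes "convex S" "x0 \<in> S" "x0 + \<Delta> *\<^sub>R v \<in> S" "0 \<le> \<Delta>'" "\<Delta>' \<le> \<Delta>" "0 < \<Delta>"
  shows "x0 + \<Delta>' *\<^sub>R v \<in> S"
proof -
  define t where "t = \<Delta>' / \<Delta>"
  have "0 \<le> t" "t \<le> 1"
    using assms(4-6) by (auto simp: t_def)
  moreover have "x0 + \<Delta>' *\<^sub>R v = (1 - t) *\<^sub>R x0 + t *\<^sub>R (x0 + \<Delta> *\<^sub>R v)"
    using assms(6) by (simp add: t_def algebra_simps)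
  ultimately show ?thesis
    using assms(1-3) by (simp add: convex_alt)
qed

theorem lemma5:
  fixes M :: "'m set" and R :: "'m \<Rightarrow> (real^'n) set"
    and S :: "(real^'n) set" and x0 :: "real^'n" and \<Delta> \<Delta>' :: real
  assumes "mms M R"
    and "closed S" and "convex S"
    and "x0 \<in> S"
    and "0 < \<Delta>'" and "\<Delta>' \<le> \<Delta>"
  shows "grid_map M R x0 \<Delta>' \<Delta> ` (grid M R x0 \<Delta>' \<inter> S) \<supseteq> grid M R x0 \<Delta> \<inter> S"
proof
  fix y assume y: "y \<in> grid M R x0 \<Delta> \<inter> S"
  then obtain i :: "real^'n \<Rightarrow> nat"
    where y_eq: "y = x0 + \<Delta> *\<^sub>R (\<Sum>r\<in>all_rates M R. real (i r) *\<^sub>R r)"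
    unfolding grid_def by blast
  define z where "z = x0 + \<Delta>' *\<^sub>R (\<Sum>r\<in>all_rates M R. real (i r) *\<^sub>R r)"
  have "z \<in> grid M R x0 \<Delta>'"
    unfolding grid_def z_def by blast
  moreover have "z \<in> S"
    using convex_shrink_towards[OF assms(3,4), of \<Delta>] y y_eq assms(5,6)
    unfolding z_def by auto
  moreover have "grid_map M R x0 \<Delta>' \<Delta> z = y"
    unfolding z_def y_eq using assms(5) by (intro grid_map_eq) simp
  ultimately show "y \<in> grid_map M R x0 \<Delta>' \<Delta> ` (grid M R x0 \<Delta>' \<inter> S)"
    by blast
qed

end
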